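(* Let $m\ge3$, let $\lambda$ be a $\mathbb{Z}_2$-characteristic map over $P_m$, and let $(p,S)$ and $(q,T)$ be e-sets compatible with $\lambda$ with $S\ne\varnothing$, $T\ne\varnothing$ and $\lambda(p)\ne\lambda(q)$. Then the edges $\{\lambda,\operatorname{inv}_S\lambda,p\}$ and $\{\lambda,\operatorname{inv}_T\lambda,q\}$ span a realizable square (i.e. there is a $\mathbb{Z}_2$-characteristic map $\Lambda$ over $\mathrm{wed}_{p,q}P_m$ with $\operatorname{proj}_{\{p_2,q_2\}}\Lambda\simeq\lambda$, $\operatorname{proj}_{\{p_1,q_2\}}\Lambda\simeq\operatorname{inv}_S\lambda$, $\operatorname{proj}_{\{p_2,q_1\}}\Lambda\simeq\operatorname{inv}_T\lambda$) if and only if $\Omega_q(S)\cap\Omega_p(T)=\varnothing$.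
   Context: $P_m$: simplicial complex on $[m]$ with facets $\{i,i+1\}$ mod $m$. A $\mathbb{Z}_2$-characteristic map over $P_m$ is a map $\lambda\colon[m]\to\{\mathbf a,\mathbf b,\mathbf c\}=\mathbb{Z}_2^2\setminus\{0\}$ with $\lambda(i)\ne\lambda(i+1)$ mod $m$; $\simeq$ denotes D-J equivalence (composition with $GL(n,\mathbb{Z}_2)$). $\operatorname{supp}_\lambda p=\lambda^{-1}(\lambda(p))$. An e-set compatible with $\lambda$ is a pair $(p,S)$ with $p\in[m]$, $S\subseteq\operatorname{supp}_\lambda p$, $|S|$ even. For nonempty such $S$ (necessarily a non-consecutive set, $|S|\ge2$), the points of $S$ cut the cycle $[m]$ into $|S|$ nonempty arcs (maximal cyclic intervals of $[m]\setminus S$), which are colored alternately black and white. $\operatorname{inv}_S\lambda$ is obtained from $\lambda$ by exchanging, on every vertex of the black arcs, the two values different from $\lambda(p)$; it is well defined up to D-J equivalence (independent of the coloring); $\operatorname{inv}_\varnothing\lambda=\lambda$. For $r\in[m]\setminus S$, $\Omega_r(S)=A\cup S$ where $A$ is the union of the black arcs for the coloring in which the arc containing $r$ is white. Wedges: $\mathrm{wed}_{p,q}P_m$ has vertices $p_1,p_2,q_1,q_2$ replacing $p,q$, minimal non-faces obtained from those of $P_m$ by replacing $p$ by $p_1,p_2$ and $q$ by $q_1,q_2$ when they occur. Characteristic maps over it take values in $\mathbb{Z}_2^{m}$ (dimension $m$ complex $-1$... i.e. $\mathbb{Z}_2^4$) with faces mapped to linearly independent sets; $\operatorname{proj}_\sigma\Lambda(w)=[\Lambda(w)]$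 modulo $\langle\Lambda(v):v\in\sigma\rangle$ on the link of $\sigma$, and the link of $\{p_i,q_j\}$ is identified with $P_m$ via $p_{3-i}\mapsto p$, $q_{3-j}\mapsto q$. *)

theory Defs
  imports "HOL-Analysis.Analysis" "HOL-Library.Z2" "HOL-Library.Numeral_Type"
begin

text \<open>Conventions. The vertex set [m] is rendered as {0..<m}; the cycle P_m has facets
  {i, (i+1) mod m}. Z_2 is the field bit (HOL-Library.Z2); Z_2^n is bit^n.\<close>

definition pm_face :: "nat \<Rightarrow> nat set \<Rightarrow> bool" where
  "pm_face m \<sigma> \<longleftrightarrow> \<sigma> \<subseteq> {0..<m} \<and> (\<exists>i<m. \<sigma> \<subseteq> {i, Suc i mod m})"

definition pm_min_nonface :: "nat \<Rightarrow> nat set \<Rightarrow> bool" where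
  "pm_min_nonface m N \<longleftrightarrow> N \<subseteq> {0..<m} \<and> \<not> pm_face m N \<and> (\<forall>x\<in>N. pm_face m (N - {x}))"

definition z2_char_map :: "nat \<Rightarrow> (nat \<Rightarrow> bit^2) \<Rightarrow> bool" where
  "z2_char_map m lam \<longleftrightarrow> (\<forall>i<m. lam i \<noteq> 0 \<and> lam i \<noteq> lam (Suc i mod m))"

definition dj_equiv :: "nat \<Rightarrow> (nat \<Rightarrow> bit^2) \<Rightarrow> (nat \<Rightarrow> bit^2) \<Rightarrow> bool" where
  "dj_equiv m lam lam' \<longleftrightarrow> (\<exists>A :: bit^2^2. invertible A \<and> (\<forall>i<m. lam' i = A *v lam i))"

definition supp :: "nat \<Rightarrow> (nat \<Rightarrow> bit^2) \<Rightarrow> nat \<Rightarrow> nat set" where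
  "supp m lam p = {i\<in>{0..<m}. lam i = lam p}"

definition eset :: "nat \<Rightarrow> (nat \<Rightarrow> bit^2) \<Rightarrow> nat \<Rightarrow> nat set \<Rightarrow> bool" where
  "eset m lam p S \<longleftrightarrow> p < m \<and> S \<subseteq> supp m lam p \<and> even (card S)"

text \<open>Alternating colouring of the arcs cut out by S: a vertex x not in S is coloured by
  the parity of the number of points of S below x. Since |S| is even, the arc wrapping
  around through m-1 and 0 gets a single colour, and consecutive arcs get opposite colours
  (S being non-consecutive). Colour True = black.\<close>
definition arc_col :: "nat set \<Rightarrow> nat \<Rightarrow> bool" where
  "arc_col S x = odd (card {s\<in>S. s < x})"

text \<open>inv_S lam: on black arcs exchange the two values different from lam p
  (x \<mapsto> x + lam p on nonzero x \<noteq> lam p).\<close>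
definition inv_set :: "nat \<Rightarrow> (nat \<Rightarrow> bit^2) \<Rightarrow> nat \<Rightarrow> nat set \<Rightarrow> nat \<Rightarrow> bit^2" where
  "inv_set m lam p S x =
     (if x \<in> {0..<m} - S \<and> arc_col S x \<and> lam x \<noteq> lam p then lam x + lam p else lam x)"

text \<open>Omega_r(S): S together with the black arcs for the colouring in which the arc
  containing r is white, i.e. the vertices outside S whose arc has colour different
  from that of r.\<close>
definition Omega :: "nat \<Rightarrow> nat \<Rightarrow> nat set \<Rightarrow> nat set" where
  "Omega m r S = S \<union> {x\<in>{0..<m} - S. arc_col S x \<noteq> arc_col S r}"

datatype wvert = Old nat | P1 | P2 | Q1 | Q2

definition wed_vertices :: "nat \<Rightarrow> nat \<Rightarrow> nat \<Rightarrow> wvert set" where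
  "wed_vertices m p q = Old ` ({0..<m} - {p, q}) \<union> {P1, P2, Q1, Q2}"

definition wed_set :: "nat \<Rightarrow> nat \<Rightarrow> nat set \<Rightarrow> wvert set" where
  "wed_set p q N = Old ` (N - {p, q}) \<union> (if p \<in> N then {P1, P2} else {})
                    \<union> (if q \<in> N then {Q1, Q2} else {})"

text \<open>Faces of wed_{p,q} P_m: vertex sets containing no minimal non-face, where the
  minimal non-faces are the images under wed_set of the minimal non-faces of P_m.\<close>
definition wed_face :: "nat \<Rightarrow> nat \<Rightarrow> nat \<Rightarrow> wvert set \<Rightarrow> bool" where
  "wed_face m p q \<tau> \<longleftrightarrow> \<tau> \<subseteq> wed_vertices m p q \<and>
     \<not> (\<exists>N. pm_min_nonface m N \<and> wed_set p q N \<subseteq> \<tau>)"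

definition wed_char_map :: "nat \<Rightarrow> nat \<Rightarrow> nat \<Rightarrow> (wvert \<Rightarrow> bit^4) \<Rightarrow> bool" where
  "wed_char_map m p q Lam \<longleftrightarrow>
     (\<forall>\<tau>. wed_face m p q \<tau> \<longrightarrow> inj_on Lam \<tau> \<and> vec.independent (Lam ` \<tau>))"

text \<open>Identification of P_m with the link of {p_i,q_j}: p \<mapsto> vp (= p_{3-i}),
  q \<mapsto> vq (= q_{3-j}), other vertices unchanged.\<close>
definition wemb :: "nat \<Rightarrow> nat \<Rightarrow> wvert \<Rightarrow> wvert \<Rightarrow> nat \<Rightarrow> wvert" where
  "wemb p q vp vq i = (if i = p then vp else if i = q then vq else Old i)"

text \<open>proj_sigma Lam \<simeq> lam, where proj_sigma Lam takes values in the 2-dimensional quotient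
  Z_2^4 / span(Lam sigma). Up to D-J equivalence, identifying the quotient with Z_2^2 amounts
  to a linear map M : Z_2^4 \<rightarrow> Z_2^2 with kernel exactly span(Lam sigma); then
  proj_sigma Lam \<simeq> lam iff M (Lam (e i)) = lam i for all vertices i of the link.\<close>
definition proj_dj_equiv ::
  "nat \<Rightarrow> (wvert \<Rightarrow> bit^4) \<Rightarrow> wvert set \<Rightarrow> (nat \<Rightarrow> wvert) \<Rightarrow> (nat \<Rightarrow> bit^2) \<Rightarrow> bool" where
  "proj_dj_equiv m Lam \<sigma> e lam \<longleftrightarrow>
     (\<exists>M :: bit^4^2. {x. M *v x = 0} = vec.span (Lam ` \<sigma>) \<and> (\<forall>i<m. M *v Lam (e i) = lam i))"

definition realizable_square ::
  "nat \<Rightarrow> nat \<Rightarrow> nat \<Rightarrow> (nat \<Rightarrow> bit^2) \<Rightarrow> (nat \<Rightarrow> bit^2) \<Rightarrow> (nat \<Rightarrow> bit^2) \<Rightarrow> bool" where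
  "realizable_square m p q lam lam1 lam2 \<longleftrightarrow>
     (\<exists>Lam. wed_char_map m p q Lam
        \<and> proj_dj_equiv m Lam {P2, Q2} (wemb p q P1 Q1) lam
        \<and> proj_dj_equiv m Lam {P1, Q2} (wemb p q P2 Q1) lam1
        \<and> proj_dj_equiv m Lam {P2, Q1} (wemb p q P1 Q2) lam2)"

end

theory Submission
  imports Defs
begin

text \<open>Write a = lam p and b = lam q; every value of lam is a, b or a + b.
  For the construction, send p1, p2, q1, q2 to the standard basis of Z_2^4 and a vertex i to
  the vector whose coordinates express lam i, inv_S lam i and inv_T lam i in the bases
  (a, b), (a, inv_S lam q) and (inv_T lam p, b) of the three projections; membership of i in
  Omega_q(S), resp. Omega_p(T), is exactly what flips the second, resp. fourth, coordinate.
  A face of the wedge contains at most two old vertices, adjacent ones, and the images are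
  independent as long as no vertex lies in both Omega sets.
  Conversely, the three projections of any realization Lam jointly determine Lam i from
  (lam i, inv_S lam i, inv_T lam i). A common vertex of the Omega sets yields either a vertex c
  with lam c = a + b, forcing Lam c = Lam p1 + Lam q1, or an edge xy with lam x = a and
  lam y = b, forcing Lam x = Lam y + Lam p1 + Lam q1; both contradict independence on a face.\<close>

section \<open>Linear algebra over fields and over Z_2\<close>

lemma not_in_span_if_functional_vanishes:
  fixes f :: "'a::field^'n \<Rightarrow> 'a"
  assumes add: "\<And>x y. f (x + y) = f x + f y" and scale: "\<And>c x. f (c *s x) = c * f x"
    and vanish: "\<forall>s\<in>S. f s = 0" and "f w \<noteq> 0"
  shows "w \<notin> vec.span S"
proof
  have "vec.subspace {x. f x = 0}"
    unfolding vec.subspace_def using add scale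
    by (auto, metis mult_zero_left scale vector_smult_lzero)
  then have "vec.span S \<subseteq> {x. f x = 0}"
    using vanish by (intro vec.span_minimal) auto
  moreover assume "w \<in> vec.span S"
  ultimately show False using \<open>f w \<noteq> 0\<close> by auto
qed

lemma independent_axes: "vec.independent ((\<lambda>l. axis l (1::'a::field)) ` L)"
  by (rule vec.independent_mono[OF independent_cart_basis]) (auto simp: cart_basis_def)

lemma not_in_span_axes:
  fixes u :: "'a::field^'n"
  assumes "u $ k \<noteq> 0" "k \<notin> L"
  shows "u \<notin> vec.span ((\<lambda>l. axis l 1) ` L)"
  by (rule not_in_span_if_functional_vanishes[where f="\<lambda>x. x $ k"])
    (use assms in \<open>auto simp: axis_def\<close>)

lemma not_in_span_insert_axes:
  fixes u w :: "'a::field^'n"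
  assumes minor: "u $ k1 * w $ k2 \<noteq> u $ k2 * w $ k1" and "k1 \<notin> L" "k2 \<notin> L"
  shows "w \<notin> vec.span (insert u ((\<lambda>l. axis l 1) ` L))"
proof (rule not_in_span_if_functional_vanishes[where f="\<lambda>x. x $ k1 * u $ k2 - x $ k2 * u $ k1"])
  show "\<forall>s\<in>insert u ((\<lambda>l. axis l 1) ` L). s $ k1 * u $ k2 - s $ k2 * u $ k1 = 0"
    using assms(2,3) by (auto simp: axis_def)
  show "w $ k1 * u $ k2 - w $ k2 * u $ k1 \<noteq> 0"
    using minor by (simp add: algebra_simps)
qed (simp_all add: algebra_simps)

lemma dependent_if_in_span_others:
  "u \<in> X \<Longrightarrow> u \<in> vec.span (X - {u}) \<Longrightarrow> vec.dependent X"
  unfolding vec.dependent_def by blast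

lemma dependent_sum3:
  fixes u v w :: "'a::field^'n"
  assumes "u = v + w" "u \<noteq> v" "u \<noteq> w"
  shows "vec.dependent {u, v, w}"
proof (rule dependent_if_in_span_others)
  have "v \<in> {u, v, w} - {u}" "w \<in> {u, v, w} - {u}" using assms by auto
  then show "u \<in> vec.span ({u, v, w} - {u})"
    unfolding assms(1) by (intro vec.span_add vec.span_base)
qed simp

lemma dependent_sum4:
  fixes u v w t :: "'a::field^'n"
  assumes "u = v + w + t" "u \<noteq> v" "u \<noteq> w" "u \<noteq> t"
  shows "vec.dependent {u, v, w, t}"
proof (rule dependent_if_in_span_others)
  have "v \<in> {u, v, w, t} - {u}" "w \<in> {u, v, w, t} - {u}" "t \<in> {u, v, w, t} - {u}"
    using assms by auto
  then show "u \<in> vec.span ({u, v, w, t} - {u})"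
    unfolding assms(1) by (intro vec.span_add vec.span_base)
qed simp

lemma bit_cases: "(x::bit) = 0 \<or> x = 1"
  by (metis bit_not_zero_iff)

lemma bitvec_add_self [simp]: "(x::bit^'n) + x = 0"
  by (simp add: vec_eq_iff)

lemma bitvec_add_self_left [simp]: "(x::bit^'n) + (x + y) = y"
  by (simp add: vec_eq_iff)

lemma bitvec_add_eq_0_iff: "(x::bit^'n) + y = 0 \<longleftrightarrow> x = y"
  by (metis add_diff_cancel_right' bitvec_add_self diff_zero)

lemma bitvec_add_eq_iff: "(x::bit^'n) + y = z \<longleftrightarrow> x = z + y"
  by (auto simp: add.assoc)

instance bit :: finite
proof
  have "(UNIV::bit set) = {0, 1}" using bit_cases by auto
  then show "finite (UNIV::bit set)" by (metis finite.emptyI finite.insertI)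
qed

lemma card_bit: "CARD(bit) = 2"
proof -
  have "(UNIV::bit set) = {0, 1}" using bit_cases by auto
  moreover have "card {0::bit, 1} = 2" by simp
  ultimately show ?thesis by metis
qed

lemma bitvec2_nonzero_cases:
  fixes x a b :: "bit^2"
  assumes "a \<noteq> 0" "b \<noteq> 0" "a \<noteq> b" "x \<noteq> 0"
  shows "x = a \<or> x = b \<or> x = a + b"
proof (rule ccontr)
  assume "\<not> ?thesis"
  moreover have "a + b \<noteq> a" "a + b \<noteq> b" "a + b \<noteq> 0"
    using assms(1-3) bitvec_add_eq_0_iff[of a b] by (auto simp: add.commute)
  ultimately have "card {0, a, b, a + b, x} = 5" using assms by auto
  moreover have "card {0, a, b, a + b, x} \<le> CARD(bit^2)" by (rule card_mono) auto
  ultimately show False by (simp add: card_bit)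
qed

lemma bitvec2_combination_eq_0_iff:
  fixes \<alpha> \<beta> :: "bit^2"
  assumes "\<alpha> \<noteq> 0" "\<beta> \<noteq> 0" "\<alpha> \<noteq> \<beta>"
  shows "s *s \<alpha> + t *s \<beta> = 0 \<longleftrightarrow> s = 0 \<and> t = 0"
  using bit_cases[of s] bit_cases[of t] assms bitvec_add_eq_0_iff[of \<alpha> \<beta>] by auto

lemma span_pair_bitvec: "vec.span {v, w::bit^'n} \<subseteq> {0, v, w, v + w}"
proof (rule vec.span_minimal)
  show "vec.subspace {0, v, w, v + w}"
    unfolding vec.subspace_def
  proof (intro conjI ballI allI)
    fix x y assume "x \<in> {0, v, w, v + w}" "y \<in> {0, v, w, v + w}"
    then show "x + y \<in> {0, v, w, v + w}" by (auto simp: add_ac)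
  next
    fix c :: bit and x assume "x \<in> {0, v, w, v + w}"
    then show "c *s x \<in> {0, v, w, v + w}" using bit_cases[of c] by auto
  qed simp
qed auto

definition two_column_matrix :: "'n \<Rightarrow> 'n \<Rightarrow> 'a::field^'m \<Rightarrow> 'a^'m \<Rightarrow> 'a^'n^'m" where
  "two_column_matrix k1 k2 \<alpha> \<beta> =
     (\<chi> r c. (if c = k1 then \<alpha> $ r else 0) + (if c = k2 then \<beta> $ r else 0))"

lemma two_column_matrix_mult:
  "two_column_matrix k1 k2 \<alpha> \<beta> *v x = x $ k1 *s \<alpha> + x $ k2 *s \<beta>"
proof -
  have "(\<Sum>c\<in>UNIV. ((if c = k1 then \<alpha> $ r else 0) + (if c = k2 then \<beta> $ r else 0)) * x $ c)
      = (\<Sum>c\<in>UNIV. (if c = k1 then \<alpha> $ r * x $ c else 0))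
        + (\<Sum>c\<in>UNIV. (if c = k2 then \<beta> $ r * x $ c else 0))" for r
    by (simp add: sum.distrib distrib_right if_distrib[where f="\<lambda>z. z * _"] cong: if_cong)
  also have "\<dots> r = x $ k1 * \<alpha> $ r + x $ k2 * \<beta> $ r" for r
    by (simp add: mult.commute)
  finally have "(two_column_matrix k1 k2 \<alpha> \<beta> *v x) $ r = (x $ k1 *s \<alpha> + x $ k2 *s \<beta>) $ r" for r
    unfolding matrix_vector_mult_def two_column_matrix_def by simp
  then show ?thesis by (simp add: vec_eq_iff)
qed

lemma span_two_axes:
  fixes k1 k2 l1 l2 :: "'n::finite"
  assumes cover: "\<And>j. j = k1 \<or> j = k2 \<or> j = l1 \<or> j = l2"
    and "l1 \<noteq> k1" "l1 \<noteq> k2" "l2 \<noteq> k1" "l2 \<noteq> k2" "l1 \<noteq> l2"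
  shows "vec.span {axis l1 (1::'a::field), axis l2 1} = {x. x $ k1 = 0 \<and> x $ k2 = 0}"
proof
  show "vec.span {axis l1 1, axis l2 1} \<subseteq> {x. x $ k1 = 0 \<and> x $ k2 = 0}"
    by (rule vec.span_minimal) (use assms(2-6) in \<open>auto simp: vec.subspace_def axis_def\<close>)
  show "{x. x $ k1 = 0 \<and> x $ k2 = 0} \<subseteq> vec.span {axis l1 (1::'a), axis l2 1}"
  proof
    fix x :: "'a^'n" assume x: "x \<in> {x. x $ k1 = 0 \<and> x $ k2 = 0}"
    have "x $ j = (x $ l1 *s axis l1 1 + x $ l2 *s axis l2 1) $ j" for j
      using cover[of j] x assms(2-6) by (auto simp: axis_def)
    then have "x = x $ l1 *s axis l1 1 + x $ l2 *s axis l2 1"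
      unfolding vec_eq_iff by blast
    also have "\<dots> \<in> vec.span {axis l1 1, axis l2 1}"
      by (intro vec.span_add vec.span_scale vec.span_base) auto
    finally show "x \<in> vec.span {axis l1 1, axis l2 1}" .
  qed
qed

lemma kernel_two_column_matrix:
  fixes k1 k2 l1 l2 :: "'n::finite" and \<alpha> \<beta> :: "bit^2"
  assumes "\<And>j. j = k1 \<or> j = k2 \<or> j = l1 \<or> j = l2"
    and "l1 \<noteq> k1" "l1 \<noteq> k2" "l2 \<noteq> k1" "l2 \<noteq> k2" "l1 \<noteq> l2"
    and "\<alpha> \<noteq> 0" "\<beta> \<noteq> 0" "\<alpha> \<noteq> \<beta>"
  shows "{x. two_column_matrix k1 k2 \<alpha> \<beta> *v x = 0} = vec.span {axis l1 1, axis l2 1}"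
  unfolding span_two_axes[OF assms(1-6)] two_column_matrix_mult
    bitvec2_combination_eq_0_iff[OF assms(7-9)] ..

lemma subset_pair_cases:
  assumes "A \<subseteq> {a, b}"
  obtains "A = {}" | "A = {a}" | "A = {b}" | "A = {a, b}" "a \<noteq> b"
  using assms by (cases "a \<in> A"; cases "b \<in> A") auto

section \<open>The cycle P_m and the wedge\<close>

definition cyc_adj :: "nat \<Rightarrow> nat \<Rightarrow> nat \<Rightarrow> bool" where
  "cyc_adj m x y \<longleftrightarrow> y = Suc x mod m \<or> x = Suc y mod m"

lemma cyc_adj_sym: "cyc_adj m x y \<longleftrightarrow> cyc_adj m y x"
  unfolding cyc_adj_def by auto

lemma cyc_edge_adj: "x \<in> {i, Suc i mod m} \<Longrightarrow> y \<in> {i, Suc i mod m} \<Longrightarrow> x = y \<or> cyc_adj m x y"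
  unfolding cyc_adj_def by auto

lemma exists_cyc_pred:
  assumes "z < m"
  obtains w where "w < m" "Suc w mod m = z"
proof (cases z)
  case 0
  then show ?thesis using assms that[of "m - 1"] by auto
next
  case (Suc w)
  then show ?thesis using assms that[of w] by auto
qed

text \<open>Crossing a point of S switches the colour; this also holds across the wrap-around
  edge from m - 1 to 0 because card S is even.\<close>
lemma arc_col_Suc_mod:
  assumes S: "S \<subseteq> {0..<m}" "even (card S)" and i: "i < m"
  shows "arc_col S (Suc i mod m) \<longleftrightarrow> arc_col S i \<noteq> (i \<in> S)"
proof -
  have below: "{s\<in>S. s < Suc i} = {s\<in>S. s < i} \<union> (if i \<in> S then {i} else {})"
    using less_Suc_eq by auto
  have "finite {s\<in>S. s < i}" by auto
  then have card_below: "card {s\<in>S. s < Suc i} = card {s\<in>S. s < i} + (if i \<in> S then 1 else 0)"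
    by (subst below) (auto simp: card_insert_if)
  show ?thesis
  proof (cases "Suc i < m")
    case True
    then show ?thesis using card_below unfolding arc_col_def by simp
  next
    case False
    then have "Suc i = m" using i by simp
    then have "{s\<in>S. s < Suc i} = S" "Suc i mod m = 0" using S(1) by auto
    then show ?thesis using S(2) card_below unfolding arc_col_def by simp
  qed
qed

lemma arc_col_adj:
  assumes "S \<subseteq> {0..<m}" "even (card S)" "x < m" "y < m" "cyc_adj m x y" "x \<notin> S" "y \<notin> S"
  shows "arc_col S x = arc_col S y"
  using assms(5-7) arc_col_Suc_mod[OF assms(1,2,3)] arc_col_Suc_mod[OF assms(1,2,4)]
  unfolding cyc_adj_def by auto

lemma pm_face_singleton: "z < m \<Longrightarrow> pm_face m {z}"
  unfolding pm_face_def by auto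

lemma pm_face_adj: "x < m \<Longrightarrow> y < m \<Longrightarrow> cyc_adj m x y \<Longrightarrow> pm_face m {x, y}"
  unfolding pm_face_def cyc_adj_def by auto

lemma pm_face_mono: "pm_face m F \<Longrightarrow> N \<subseteq> F \<Longrightarrow> pm_face m N"
  unfolding pm_face_def by blast

lemma exists_pm_min_nonface:
  "finite N0 \<Longrightarrow> N0 \<subseteq> {0..<m} \<Longrightarrow> \<not> pm_face m N0 \<Longrightarrow> \<exists>N\<subseteq>N0. pm_min_nonface m N"
proof (induction "card N0" arbitrary: N0 rule: less_induct)
  case less
  show ?case
  proof (cases "\<forall>x\<in>N0. pm_face m (N0 - {x})")
    case True
    then show ?thesis using less.prems unfolding pm_min_nonface_def by blast
  next
    case False
    then obtain x where x: "x \<in> N0" "\<not> pm_face m (N0 - {x})" by blast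
    then have "card (N0 - {x}) < card N0" using less.prems(1) by (meson card_Diff1_less)
    then show ?thesis using less.hyps[of "N0 - {x}"] less.prems x by blast
  qed
qed

lemma Old_in_wed_vertices_iff: "Old k \<in> wed_vertices m p q \<longleftrightarrow> k < m \<and> k \<noteq> p \<and> k \<noteq> q"
  unfolding wed_vertices_def by auto

text \<open>The vertices of P_m covered by a face of the wedge: a vertex p (or q) counts only when
  both of its copies are present.\<close>
definition wed_shadow :: "nat \<Rightarrow> nat \<Rightarrow> wvert set \<Rightarrow> nat set" where
  "wed_shadow p q \<tau> = {k. Old k \<in> \<tau>} \<union> (if P1 \<in> \<tau> \<and> P2 \<in> \<tau> then {p} else {})
     \<union> (if Q1 \<in> \<tau> \<and> Q2 \<in> \<tau> then {q} else {})"

lemma pm_face_wed_shadow: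
  assumes face: "wed_face m p q \<tau>" and "p < m" "q < m" "p \<noteq> q"
  shows "pm_face m (wed_shadow p q \<tau>)"
proof (rule ccontr)
  assume nonface: "\<not> pm_face m (wed_shadow p q \<tau>)"
  have sub: "\<tau> \<subseteq> wed_vertices m p q" using face unfolding wed_face_def by blast
  then have "wed_shadow p q \<tau> \<subseteq> {0..<m}"
    using assms(2-4) Old_in_wed_vertices_iff unfolding wed_shadow_def by auto
  then obtain N where N: "N \<subseteq> wed_shadow p q \<tau>" "pm_min_nonface m N"
    using exists_pm_min_nonface nonface finite_subset by (metis finite_atLeastLessThan)
  have "Old p \<notin> \<tau>" "Old q \<notin> \<tau>" using sub Old_in_wed_vertices_iff by blast+
  then have "wed_set p q N \<subseteq> \<tau>"
    using N(1) assms(4) unfolding wed_set_def wed_shadow_def by (auto split: if_splits)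
  then show False using face N(2) unfolding wed_face_def by blast
qed

lemma wed_face_Old_P1_Q1:
  assumes "F \<subseteq> {0..<m} - {p, q}" "pm_face m F"
  shows "wed_face m p q (Old ` F \<union> {P1, Q1})"
  unfolding wed_face_def
proof
  show "Old ` F \<union> {P1, Q1} \<subseteq> wed_vertices m p q"
    using assms(1) unfolding wed_vertices_def by auto
  show "\<not> (\<exists>N. pm_min_nonface m N \<and> wed_set p q N \<subseteq> Old ` F \<union> {P1, Q1})"
  proof
    assume "\<exists>N. pm_min_nonface m N \<and> wed_set p q N \<subseteq> Old ` F \<union> {P1, Q1}"
    then obtain N where N: "pm_min_nonface m N" "wed_set p q N \<subseteq> Old ` F \<union> {P1, Q1}"
      by blast
    then have "N \<subseteq> F" unfolding wed_set_def by (auto split: if_splits)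
    then show False using N(1) pm_face_mono assms(2) unfolding pm_min_nonface_def by blast
  qed
qed

section \<open>Two e-sets with distinct colours\<close>

locale two_esets =
  fixes m :: nat and lam :: "nat \<Rightarrow> bit^2" and p q :: nat and S T :: "nat set"
  assumes char_map: "z2_char_map m lam"
    and eset_S: "eset m lam p S" and eset_T: "eset m lam q T"
    and lam_p_neq_q: "lam p \<noteq> lam q"
begin

lemma p_less: "p < m" and q_less: "q < m" and S_subset: "S \<subseteq> {0..<m}"
  and even_card_S: "even (card S)" and lam_S: "s \<in> S \<Longrightarrow> lam s = lam p"
  using eset_S eset_T unfolding eset_def supp_def by auto

lemma p_neq_q: "p \<noteq> q"
  using lam_p_neq_q by blast

lemma q_notin_S: "q \<notin> S"
  using lam_S lam_p_neq_q by metis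

lemma lam_nonzero: "i < m \<Longrightarrow> lam i \<noteq> 0"
  using char_map unfolding z2_char_map_def by auto

lemma lam_adj_neq: "x < m \<Longrightarrow> y < m \<Longrightarrow> cyc_adj m x y \<Longrightarrow> lam x \<noteq> lam y"
  using char_map unfolding z2_char_map_def cyc_adj_def by metis

lemma lam_cases: "i < m \<Longrightarrow> lam i = lam p \<or> lam i = lam q \<or> lam i = lam p + lam q"
  using bitvec2_nonzero_cases lam_nonzero p_less q_less lam_p_neq_q by blast

lemma lam_sum_neq: "lam p + lam q \<noteq> lam p" "lam p + lam q \<noteq> lam q" "lam p + lam q \<noteq> 0"
  using lam_nonzero[OF p_less] lam_nonzero[OF q_less] lam_p_neq_q bitvec_add_eq_0_iff
  by (auto simp: add.commute)

lemma mem_Omega_iff: "x < m \<Longrightarrow> x \<in> Omega m q S \<longleftrightarrow> x \<in> S \<or> arc_col S x \<noteq> arc_col S q"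
  unfolding Omega_def by auto

lemma Omega_less: "x \<in> Omega m q S \<Longrightarrow> x < m"
  unfolding Omega_def using S_subset by auto

lemma q_notin_Omega: "q \<notin> Omega m q S"
  using mem_Omega_iff[OF q_less] q_notin_S by auto

lemma Omega_adj_closed:
  assumes "x < m" "y < m" "cyc_adj m x y" "x \<in> Omega m q S" "x \<notin> S"
  shows "y \<in> Omega m q S"
  using assms arc_col_adj[OF S_subset even_card_S assms(1-3)] mem_Omega_iff by auto

lemma Omega_adj_iff:
  assumes "x < m" "y < m" "cyc_adj m x y" "lam x \<noteq> lam p" "lam y \<noteq> lam p"
  shows "x \<in> Omega m q S \<longleftrightarrow> y \<in> Omega m q S"
  using assms Omega_adj_closed lam_S cyc_adj_sym by metis

lemma Omega_adj_closed_to_supp: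
  assumes "x < m" "y < m" "cyc_adj m x y" "lam x = lam p" "lam y \<noteq> lam p" "y \<in> Omega m q S"
  shows "x \<in> Omega m q S"
  using assms Omega_adj_closed lam_S cyc_adj_sym by metis

lemma notin_Omega_if_adj_q:
  assumes "x < m" "cyc_adj m x q" "lam x \<noteq> lam p"
  shows "x \<notin> Omega m q S"
  using Omega_adj_closed[OF assms(1) q_less assms(2)] q_notin_Omega lam_S assms(3) by metis

lemma inv_set_supp: "lam y = lam p \<Longrightarrow> inv_set m lam p S y = lam y"
  unfolding inv_set_def by auto

lemma inv_set_q: "inv_set m lam p S q = (if arc_col S q then lam q + lam p else lam q)"
  unfolding inv_set_def using q_less q_notin_S lam_p_neq_q by auto

lemma inv_set_q_props: "inv_set m lam p S q \<noteq> 0" "inv_set m lam p S q \<noteq> lam p"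
  unfolding inv_set_q using lam_nonzero[OF q_less] lam_p_neq_q lam_sum_neq
  by (auto simp: add.commute)

lemma inv_set_off_supp:
  assumes "y < m" "lam y \<noteq> lam p"
  shows "inv_set m lam p S y = (if arc_col S y then lam y + lam p else lam y)"
  unfolding inv_set_def using assms lam_S by auto

text \<open>Off the support of lam p, inv_S lam differs from lam by adding lam p exactly on
  the black arcs; relative to q this happens exactly on Omega.\<close>
lemma inv_set_add_q:
  assumes "y < m" "y \<in> Omega m q S" "lam y \<noteq> lam p"
  shows "inv_set m lam p S y + inv_set m lam p S q = lam y + lam q + lam p"
proof -
  have "arc_col S y \<noteq> arc_col S q" using assms lam_S mem_Omega_iff by metis
  then show ?thesis unfolding inv_set_off_supp[OF assms(1,3)] inv_set_q
    by (cases "arc_col S y") (simp_all add: add_ac)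
qed

lemma inv_set_decomposition:
  assumes i: "i < m"
  shows "inv_set m lam p S i =
    of_bool ((lam i \<noteq> lam q) \<noteq> (lam i \<noteq> lam p \<and> i \<in> Omega m q S)) *s lam p
    + of_bool (lam i \<noteq> lam p) *s inv_set m lam p S q"
proof (cases "lam i = lam p")
  case True
  then show ?thesis using inv_set_supp lam_p_neq_q by simp
next
  case False
  then have "i \<notin> S" using lam_S by blast
  moreover have "lam i = lam q \<or> lam i = lam p + lam q" using lam_cases[OF i] False by blast
  ultimately show ?thesis
    unfolding inv_set_off_supp[OF i False] inv_set_q using False lam_sum_neq mem_Omega_iff[OF i]
    by (cases "arc_col S i"; cases "arc_col S q") (auto simp: add_ac)
qed

end

sublocale two_esets \<subseteq> swap: two_esets m lam q p T S
  using char_map eset_S eset_T lam_p_neq_q by unfold_locales auto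

context two_esets
begin

text \<open>If z \<in> S, its two neighbours lie on arcs of different colours, so one of them is in
  Omega_q(S).\<close>
lemma Omega_meet_neighbour:
  assumes z: "z \<in> Omega m q S" "z \<in> Omega m p T" and lam_z: "lam z = lam p"
  obtains w where "w < m" "cyc_adj m z w" "lam w \<noteq> lam p" "w \<in> Omega m q S" "w \<in> Omega m p T"
proof -
  have z_less: "z < m" using Omega_less z(1) by blast
  have "z \<notin> T" using swap.lam_S lam_z lam_p_neq_q by metis
  then have in_T: "w \<in> Omega m p T" if "w < m" "cyc_adj m z w" for w
    using swap.Omega_adj_closed[OF z_less that z(2)] by blast
  have off_p: "lam w \<noteq> lam p" if "w < m" "cyc_adj m z w" for w
    using lam_adj_neq[OF z_less that] lam_z by simp
  define w1 where "w1 = Suc z mod m"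
  have w1: "w1 < m" "cyc_adj m z w1" unfolding w1_def cyc_adj_def using z_less by auto
  obtain w0 where w0: "w0 < m" "Suc w0 mod m = z" using exists_cyc_pred[OF z_less] by blast
  have w0_adj: "cyc_adj m z w0" using w0 unfolding cyc_adj_def by auto
  have "w1 \<in> Omega m q S \<or> w0 \<in> Omega m q S"
  proof (cases "z \<in> S")
    case False
    then show ?thesis using Omega_adj_closed[OF z_less w1 z(1)] by blast
  next
    case True
    have "w0 \<notin> S" "w1 \<notin> S" using off_p w0(1) w0_adj w1 lam_S by metis+
    moreover have "arc_col S w1 \<noteq> arc_col S z" "arc_col S z = arc_col S w0"
      using arc_col_Suc_mod[OF S_subset even_card_S z_less] True
        arc_col_Suc_mod[OF S_subset even_card_S w0(1)] w0(2) \<open>w0 \<notin> S\<close>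
      unfolding w1_def by auto
    ultimately show ?thesis using mem_Omega_iff w0(1) w1(1) by metis
  qed
  then show ?thesis using that w1 w0(1) w0_adj in_T off_p by blast
qed

end

(* reopened so that the swapped instance swap.Omega_meet_neighbour is available *)
context two_esets
begin

lemma Omega_meet_cases:
  assumes "z \<in> Omega m q S" "z \<in> Omega m p T"
  obtains (mixed) c where "c < m" "lam c \<noteq> lam p" "lam c \<noteq> lam q"
      "c \<in> Omega m q S" "c \<in> Omega m p T"
    | (edge) x y where "x < m" "y < m" "cyc_adj m x y" "lam x = lam p" "lam y = lam q"
      "x \<in> Omega m q S" "x \<in> Omega m p T" "y \<in> Omega m q S" "y \<in> Omega m p T"
proof -
  have z_less: "z < m" using Omega_less assms(1) by blast
  consider "lam z = lam p" | "lam z = lam q" | "lam z \<noteq> lam p" "lam z \<noteq> lam q" by blast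
  then show ?thesis
  proof cases
    case 1
    obtain w where "w < m" "cyc_adj m z w" "lam w \<noteq> lam p" "w \<in> Omega m q S" "w \<in> Omega m p T"
      using Omega_meet_neighbour[OF assms 1] by blast
    then show ?thesis using that assms z_less 1 by (cases "lam w = lam q") blast+
  next
    case 2
    obtain w where "w < m" "cyc_adj m z w" "lam w \<noteq> lam q" "w \<in> Omega m p T" "w \<in> Omega m q S"
      using swap.Omega_meet_neighbour[OF assms(2,1) 2] by blast
    then show ?thesis using that assms z_less 2 cyc_adj_sym by (cases "lam w = lam p") blast+
  qed (use that assms z_less in blast)
qed

end

section \<open>Obstruction to realizability\<close>

locale square_realization = two_esets +
  fixes Lam :: "wvert \<Rightarrow> bit^4" and M0 MS MT :: "bit^4^2"
  assumes Lam_char_map: "wed_char_map m p q Lam"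
    and kernel_M0: "{x. M0 *v x = 0} = vec.span {Lam P2, Lam Q2}"
    and M0_Lam: "\<forall>i<m. M0 *v Lam (wemb p q P1 Q1 i) = lam i"
    and kernel_MS: "{x. MS *v x = 0} = vec.span {Lam P1, Lam Q2}"
    and MS_Lam: "\<forall>i<m. MS *v Lam (wemb p q P2 Q1 i) = inv_set m lam p S i"
    and kernel_MT: "{x. MT *v x = 0} = vec.span {Lam P2, Lam Q1}"
    and MT_Lam: "\<forall>i<m. MT *v Lam (wemb p q P1 Q2 i) = inv_set m lam q T i"

lemma (in two_esets) realizable_square_realization:
  assumes "realizable_square m p q lam (inv_set m lam p S) (inv_set m lam q T)"
  obtains Lam M0 MS MT where "square_realization m lam p q S T Lam M0 MS MT"
proof -
  obtain Lam where Lam: "wed_char_map m p q Lam"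
    and "proj_dj_equiv m Lam {P2, Q2} (wemb p q P1 Q1) lam"
    and "proj_dj_equiv m Lam {P1, Q2} (wemb p q P2 Q1) (inv_set m lam p S)"
    and "proj_dj_equiv m Lam {P2, Q1} (wemb p q P1 Q2) (inv_set m lam q T)"
    using assms unfolding realizable_square_def by blast
  then obtain M0 MS MT
    where "{x. M0 *v x = 0} = vec.span {Lam P2, Lam Q2}"
      "\<forall>i<m. M0 *v Lam (wemb p q P1 Q1 i) = lam i"
    and "{x. MS *v x = 0} = vec.span {Lam P1, Lam Q2}"
      "\<forall>i<m. MS *v Lam (wemb p q P2 Q1 i) = inv_set m lam p S i"
    and "{x. MT *v x = 0} = vec.span {Lam P2, Lam Q1}"
      "\<forall>i<m. MT *v Lam (wemb p q P1 Q2 i) = inv_set m lam q T i"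
    unfolding proj_dj_equiv_def by auto
  with Lam show thesis
    by (intro that square_realization.intro two_esets_axioms square_realization_axioms.intro)
qed

context square_realization
begin

lemma M0_P1: "M0 *v Lam P1 = lam p" and M0_Q1: "M0 *v Lam Q1 = lam q"
  and M0_Old: "i < m \<Longrightarrow> i \<noteq> p \<Longrightarrow> i \<noteq> q \<Longrightarrow> M0 *v Lam (Old i) = lam i"
  using M0_Lam p_less q_less p_neq_q by (auto simp: wemb_def)

lemma MS_P2: "MS *v Lam P2 = lam p" and MS_Q1: "MS *v Lam Q1 = inv_set m lam p S q"
  and MS_Old: "i < m \<Longrightarrow> i \<noteq> p \<Longrightarrow> i \<noteq> q \<Longrightarrow> MS *v Lam (Old i) = inv_set m lam p S i"
  using MS_Lam p_less q_less p_neq_q inv_set_supp[of p] by (auto simp: wemb_def)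

lemma MT_P1: "MT *v Lam P1 = inv_set m lam q T p" and MT_Q2: "MT *v Lam Q2 = lam q"
  and MT_Old: "i < m \<Longrightarrow> i \<noteq> p \<Longrightarrow> i \<noteq> q \<Longrightarrow> MT *v Lam (Old i) = inv_set m lam q T i"
  using MT_Lam p_less q_less p_neq_q swap.inv_set_supp[of q] by (auto simp: wemb_def)

lemma kernel_vanish: "M0 *v Lam P2 = 0" "M0 *v Lam Q2 = 0" "MS *v Lam P1 = 0"
  "MS *v Lam Q2 = 0" "MT *v Lam P2 = 0" "MT *v Lam Q1 = 0"
  using kernel_M0 kernel_MS kernel_MT vec.span_base by blast+

text \<open>The three projections together are injective: the kernel of M0 has only four elements,
  and MS, MT separate them.\<close>
lemma eq_if_projections_eq:
  assumes "M0 *v d = M0 *v e" "MS *v d = MS *v e" "MT *v d = MT *v e"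
  shows "d = e"
proof -
  have "k = 0" if k: "M0 *v k = 0" "MS *v k = 0" "MT *v k = 0" for k
  proof -
    have "k \<in> {0, Lam P2, Lam Q2, Lam P2 + Lam Q2}"
      using k(1) kernel_M0 span_pair_bitvec by blast
    then show "k = 0"
      using k(2,3) MS_P2 MT_Q2 kernel_vanish lam_nonzero[OF p_less] lam_nonzero[OF q_less]
      by (auto simp: matrix_vector_right_distrib)
  qed
  moreover have "M0 *v (d + e) = 0" "MS *v (d + e) = 0" "MT *v (d + e) = 0"
    using assms by (simp_all add: matrix_vector_right_distrib)
  ultimately show ?thesis using bitvec_add_eq_0_iff by blast
qed

lemma Lam_face: "wed_face m p q \<tau> \<Longrightarrow> inj_on Lam \<tau> \<and> vec.independent (Lam ` \<tau>)"
  using Lam_char_map unfolding wed_char_map_def by blast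

text \<open>Lam c is forced to be Lam P1 + Lam Q1 on the face {c, p1, q1}.\<close>
lemma no_mixed_vertex_in_Omegas:
  assumes c: "c < m" "lam c \<noteq> lam p" "lam c \<noteq> lam q" "c \<in> Omega m q S" "c \<in> Omega m p T"
  shows False
proof -
  have "c \<noteq> p" "c \<noteq> q" using c by auto
  have lam_c: "lam c = lam p + lam q" using lam_cases[OF c(1)] c(2,3) by blast
  have "inv_set m lam p S c + inv_set m lam p S q = 0"
    using inv_set_add_q[OF c(1,4,2)] lam_c by (simp add: add_ac)
  moreover have "inv_set m lam q T c + inv_set m lam q T p = 0"
    using swap.inv_set_add_q[OF c(1,5,3)] lam_c by (simp add: add_ac)
  ultimately have "Lam (Old c) = Lam P1 + Lam Q1"
    using M0_Old[OF c(1) \<open>c \<noteq> p\<close> \<open>c \<noteq> q\<close>] MS_Old[OF c(1) \<open>c \<noteq> p\<close> \<open>c \<noteq> q\<close>]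
      MT_Old[OF c(1) \<open>c \<noteq> p\<close> \<open>c \<noteq> q\<close>] M0_P1 M0_Q1 MS_Q1 MT_P1 kernel_vanish lam_c
    by (intro eq_if_projections_eq) (simp_all add: matrix_vector_right_distrib bitvec_add_eq_0_iff)
  moreover have face: "wed_face m p q (Old ` {c} \<union> {P1, Q1})"
    using c \<open>c \<noteq> p\<close> \<open>c \<noteq> q\<close> by (intro wed_face_Old_P1_Q1 pm_face_singleton) auto
  then have "Lam (Old c) \<noteq> Lam P1" "Lam (Old c) \<noteq> Lam Q1"
    using Lam_face unfolding inj_on_def by auto
  ultimately have "vec.dependent {Lam (Old c), Lam P1, Lam Q1}" by (rule dependent_sum3)
  moreover have "Lam ` (Old ` {c} \<union> {P1, Q1}) = {Lam (Old c), Lam P1, Lam Q1}" by auto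
  ultimately show False using Lam_face[OF face] by simp
qed

text \<open>Lam x is forced to be Lam y + Lam P1 + Lam Q1 on the face {x, y, p1, q1}.\<close>
lemma no_edge_in_Omegas:
  assumes xy: "x < m" "y < m" "cyc_adj m x y" "lam x = lam p" "lam y = lam q"
    and Omegas: "x \<in> Omega m q S" "x \<in> Omega m p T" "y \<in> Omega m q S" "y \<in> Omega m p T"
  shows False
proof -
  have x: "x \<noteq> p" "x \<noteq> q" using xy(4) Omegas(2) swap.q_notin_Omega lam_p_neq_q by auto
  have y: "y \<noteq> p" "y \<noteq> q" using xy(5) Omegas(3) q_notin_Omega lam_p_neq_q by auto
  have "x \<noteq> y" using xy lam_p_neq_q by auto
  have "inv_set m lam p S y + inv_set m lam p S q = lam p"
    using inv_set_add_q[OF xy(2) Omegas(3)] xy(5) lam_p_neq_q by simp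
  moreover have "inv_set m lam q T x = lam q + inv_set m lam q T p"
    using swap.inv_set_add_q[OF xy(1) Omegas(2)] xy(4) lam_p_neq_q by (simp add: bitvec_add_eq_iff)
  ultimately have "Lam (Old x) = Lam (Old y) + Lam P1 + Lam Q1"
    using M0_Old[OF xy(1) x] M0_Old[OF xy(2) y] MS_Old[OF xy(1) x] MS_Old[OF xy(2) y]
      MT_Old[OF xy(1) x] MT_Old[OF xy(2) y] M0_P1 M0_Q1 MS_Q1 MT_P1 kernel_vanish
      inv_set_supp[OF xy(4)] swap.inv_set_supp[OF xy(5)] xy(4,5)
    by (intro eq_if_projections_eq) (simp_all add: matrix_vector_right_distrib add_ac)
  moreover have face: "wed_face m p q (Old ` {x, y} \<union> {P1, Q1})"
    using xy x y by (intro wed_face_Old_P1_Q1 pm_face_adj) auto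
  then have "Lam (Old x) \<noteq> Lam (Old y)" "Lam (Old x) \<noteq> Lam P1" "Lam (Old x) \<noteq> Lam Q1"
    using Lam_face \<open>x \<noteq> y\<close> unfolding inj_on_def by auto
  ultimately have "vec.dependent {Lam (Old x), Lam (Old y), Lam P1, Lam Q1}"
    by (rule dependent_sum4)
  moreover have "Lam ` (Old ` {x, y} \<union> {P1, Q1}) = {Lam (Old x), Lam (Old y), Lam P1, Lam Q1}"
    by auto
  ultimately show False using Lam_face[OF face] by simp
qed

end

lemma (in two_esets) Omegas_disjoint_if_realizable:
  assumes "realizable_square m p q lam (inv_set m lam p S) (inv_set m lam q T)"
  shows "Omega m q S \<inter> Omega m p T = {}"
proof (rule ccontr)
  assume "Omega m q S \<inter> Omega m p T \<noteq> {}"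
  then obtain z where "z \<in> Omega m q S" "z \<in> Omega m p T" by blast
  moreover obtain Lam M0 MS MT where real: "square_realization m lam p q S T Lam M0 MS MT"
    using realizable_square_realization[OF assms] .
  ultimately show False
  proof (cases rule: Omega_meet_cases)
    case mixed
    then show False using square_realization.no_mixed_vertex_in_Omegas[OF real] by blast
  next
    case edge
    then show False using square_realization.no_edge_in_Omegas[OF real] by blast
  qed
qed

section \<open>Construction of a realization\<close>

definition wedge_axes :: "wvert set \<Rightarrow> 4 set" where
  "wedge_axes \<tau> =
     {l. (l = 1 \<and> P1 \<in> \<tau>) \<or> (l = 2 \<and> P2 \<in> \<tau>) \<or> (l = 3 \<and> Q1 \<in> \<tau>) \<or> (l = 4 \<and> Q2 \<in> \<tau>)}"

context two_esets
begin

text \<open>The coordinates are chosen so that lam i = x1 lam p + x3 lam q and, by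
  inv_set_decomposition, inv_S lam i = x2 lam p + x3 inv_S lam q and
  inv_T lam i = x1 inv_T lam p + x4 lam q.\<close>
definition vertex_vec :: "nat \<Rightarrow> bit^4" where
  "vertex_vec i = (\<chi> k.
     if k = 1 then of_bool (lam i \<noteq> lam q)
     else if k = 2 then of_bool ((lam i \<noteq> lam q) \<noteq> (lam i \<noteq> lam p \<and> i \<in> Omega m q S))
     else if k = 3 then of_bool (lam i \<noteq> lam p)
     else of_bool ((lam i \<noteq> lam p) \<noteq> (lam i \<noteq> lam q \<and> i \<in> Omega m p T)))"

lemma vertex_vec_nth:
  "vertex_vec i $ 1 = of_bool (lam i \<noteq> lam q)"
  "vertex_vec i $ 2 = of_bool ((lam i \<noteq> lam q) \<noteq> (lam i \<noteq> lam p \<and> i \<in> Omega m q S))"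
  "vertex_vec i $ 3 = of_bool (lam i \<noteq> lam p)"
  "vertex_vec i $ 4 = of_bool ((lam i \<noteq> lam p) \<noteq> (lam i \<noteq> lam q \<and> i \<in> Omega m p T))"
  unfolding vertex_vec_def by simp_all

definition square_map :: "wvert \<Rightarrow> bit^4" where
  "square_map v = (case v of P1 \<Rightarrow> axis 1 1 | P2 \<Rightarrow> axis 2 1 | Q1 \<Rightarrow> axis 3 1 | Q2 \<Rightarrow> axis 4 1
     | Old i \<Rightarrow> vertex_vec i)"

lemma proj_square_map_lam: "proj_dj_equiv m square_map {P2, Q2} (wemb p q P1 Q1) lam"
  unfolding proj_dj_equiv_def
proof (intro exI conjI allI impI)
  show "{x. two_column_matrix 1 3 (lam p) (lam q) *v x = 0} = vec.span (square_map ` {P2, Q2})"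
    unfolding square_map_def
    by (simp, rule kernel_two_column_matrix)
      (use exhaust_4 lam_nonzero p_less q_less lam_p_neq_q in auto)
  fix i assume "i < m"
  then show "two_column_matrix 1 3 (lam p) (lam q) *v square_map (wemb p q P1 Q1 i) = lam i"
    using lam_cases[of i] lam_p_neq_q p_neq_q
    by (auto simp: wemb_def square_map_def two_column_matrix_mult vertex_vec_nth axis_def)
qed

lemma proj_square_map_inv_S:
  "proj_dj_equiv m square_map {P1, Q2} (wemb p q P2 Q1) (inv_set m lam p S)"
  unfolding proj_dj_equiv_def
proof (intro exI conjI allI impI)
  show "{x. two_column_matrix 2 3 (lam p) (inv_set m lam p S q) *v x = 0}
      = vec.span (square_map ` {P1, Q2})"
    unfolding square_map_def
    by (simp, rule kernel_two_column_matrix)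
      (use exhaust_4 lam_nonzero[OF p_less] inv_set_q_props in auto)
  fix i assume "i < m"
  then show "two_column_matrix 2 3 (lam p) (inv_set m lam p S q) *v square_map (wemb p q P2 Q1 i)
      = inv_set m lam p S i"
    using inv_set_decomposition[of i] inv_set_supp[of p] p_neq_q
    by (auto simp: wemb_def square_map_def two_column_matrix_mult vertex_vec_nth axis_def)
qed

lemma proj_square_map_inv_T:
  "proj_dj_equiv m square_map {P2, Q1} (wemb p q P1 Q2) (inv_set m lam q T)"
  unfolding proj_dj_equiv_def
proof (intro exI conjI allI impI)
  show "{x. two_column_matrix 1 4 (inv_set m lam q T p) (lam q) *v x = 0}
      = vec.span (square_map ` {P2, Q1})"
    unfolding square_map_def
    by (simp, rule kernel_two_column_matrix)
      (use exhaust_4 lam_nonzero[OF q_less] swap.inv_set_q_props in auto)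
  fix i assume "i < m"
  then show "two_column_matrix 1 4 (inv_set m lam q T p) (lam q) *v square_map (wemb p q P1 Q2 i)
      = inv_set m lam q T i"
    using swap.inv_set_decomposition[of i] swap.inv_set_supp[of q] p_neq_q
    by (auto simp: wemb_def square_map_def two_column_matrix_mult vertex_vec_nth axis_def
        add.commute)
qed

lemma square_map_image:
  "square_map ` \<tau> = vertex_vec ` {k. Old k \<in> \<tau>} \<union> (\<lambda>l. axis l 1) ` wedge_axes \<tau>"
proof
  show "square_map ` \<tau> \<subseteq> vertex_vec ` {k. Old k \<in> \<tau>} \<union> (\<lambda>l. axis l 1) ` wedge_axes \<tau>"
  proof
    fix y assume "y \<in> square_map ` \<tau>"
    then obtain v where "v \<in> \<tau>" "y = square_map v" by blast
    then show "y \<in> vertex_vec ` {k. Old k \<in> \<tau>} \<union> (\<lambda>l. axis l 1) ` wedge_axes \<tau>"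
      by (cases v) (auto simp: square_map_def wedge_axes_def)
  qed
  have "axis l 1 \<in> square_map ` \<tau>" if "l \<in> wedge_axes \<tau>" for l
    using that unfolding wedge_axes_def
    by (auto intro: rev_image_eqI[of P1] rev_image_eqI[of P2] rev_image_eqI[of Q1]
        rev_image_eqI[of Q2] simp: square_map_def)
  moreover have "vertex_vec k \<in> square_map ` \<tau>" if "Old k \<in> \<tau>" for k
    using that by (intro rev_image_eqI[of "Old k"]) (auto simp: square_map_def)
  ultimately show "vertex_vec ` {k. Old k \<in> \<tau>} \<union> (\<lambda>l. axis l 1) ` wedge_axes \<tau> \<subseteq> square_map ` \<tau>"
    by blast
qed

lemma inj_on_square_map:
  assumes "inj_on vertex_vec {k. Old k \<in> \<tau>}"
    and "vertex_vec ` {k. Old k \<in> \<tau>} \<inter> (\<lambda>l. axis l 1) ` wedge_axes \<tau> = {}"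
  shows "inj_on square_map \<tau>"
  unfolding inj_on_def
proof (intro ballI impI)
  fix v w assume vw: "v \<in> \<tau>" "w \<in> \<tau>" "square_map v = square_map w"
  have "vertex_vec x \<noteq> axis l 1" "axis l 1 \<noteq> vertex_vec x"
    if "Old x \<in> \<tau>" "l \<in> wedge_axes \<tau>" for x l
    using assms(2) that by blast+
  moreover have "P1 \<in> \<tau> \<Longrightarrow> 1 \<in> wedge_axes \<tau>" "P2 \<in> \<tau> \<Longrightarrow> 2 \<in> wedge_axes \<tau>"
    "Q1 \<in> \<tau> \<Longrightarrow> 3 \<in> wedge_axes \<tau>" "Q2 \<in> \<tau> \<Longrightarrow> 4 \<in> wedge_axes \<tau>"
    unfolding wedge_axes_def by auto
  ultimately show "v = w"
    using vw assms(1) by (cases v; cases w) (auto simp: square_map_def axis_eq_axis inj_on_def)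
qed

end

locale disjoint_Omegas = two_esets +
  assumes Omegas_disjoint: "Omega m q S \<inter> Omega m p T = {}"
begin

lemma vertex_vec_coord_outside:
  assumes x: "x < m" "x \<noteq> p" "x \<noteq> q"
    and P: "{1, 2} \<subseteq> L \<Longrightarrow> cyc_adj m x p \<and> \<not> {3, 4} \<subseteq> L"
    and Q: "{3, 4} \<subseteq> L \<Longrightarrow> cyc_adj m x q \<and> \<not> {1, 2} \<subseteq> L"
  shows "\<exists>k. k \<notin> L \<and> vertex_vec x $ k \<noteq> 0"
proof -
  have adj_p: "vertex_vec x $ 3 \<noteq> 0 \<and> vertex_vec x $ 4 \<noteq> 0" if "cyc_adj m x p"
  proof -
    have "lam x \<noteq> lam p" using lam_adj_neq[OF x(1) p_less that] .
    moreover have "lam x \<noteq> lam q \<Longrightarrow> x \<notin> Omega m p T"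
      using swap.notin_Omega_if_adj_q[OF x(1) that] by blast
    ultimately show ?thesis unfolding vertex_vec_nth by auto
  qed
  have adj_q: "vertex_vec x $ 1 \<noteq> 0 \<and> vertex_vec x $ 2 \<noteq> 0" if "cyc_adj m x q"
  proof -
    have "lam x \<noteq> lam q" using lam_adj_neq[OF x(1) q_less that] .
    moreover have "lam x \<noteq> lam p \<Longrightarrow> x \<notin> Omega m q S"
      using notin_Omega_if_adj_q[OF x(1) that] by blast
    ultimately show ?thesis unfolding vertex_vec_nth by auto
  qed
  have any: "vertex_vec x $ k1 \<noteq> 0 \<or> vertex_vec x $ k2 \<noteq> 0" if "k1 \<in> {1, 2}" "k2 \<in> {3, 4}"
    for k1 k2
  proof -
    have "\<not> (x \<in> Omega m q S \<and> x \<in> Omega m p T)" using Omegas_disjoint by blast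
    then show ?thesis using that lam_p_neq_q by (auto simp: vertex_vec_nth)
  qed
  consider "{1, 2} \<subseteq> L" | "{3, 4} \<subseteq> L" | "\<not> {1, 2} \<subseteq> L" "\<not> {3, 4} \<subseteq> L" by blast
  then show ?thesis
  proof cases
    case 1
    then show ?thesis using P adj_p by auto
  next
    case 2
    then show ?thesis using Q adj_q by auto
  next
    case 3
    then obtain k1 k2 where "k1 \<in> {1, 2}" "k2 \<in> {3, 4}" "k1 \<notin> L" "k2 \<notin> L" by auto
    then show ?thesis using any by blast
  qed
qed

lemma vertex_vec_minor:
  assumes xy: "x < m" "y < m" "cyc_adj m x y" and k: "k1 \<in> {1, 2}" "k2 \<in> {3, 4}"
  shows "vertex_vec x $ k1 * vertex_vec y $ k2 \<noteq> vertex_vec x $ k2 * vertex_vec y $ k1"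
proof -
  have "lam x \<noteq> lam y" using lam_adj_neq[OF xy] .
  moreover have "lam x \<noteq> lam p \<or> lam x \<noteq> lam q" "lam y \<noteq> lam p \<or> lam y \<noteq> lam q"
    using lam_p_neq_q by auto
  moreover have "lam x = lam p \<or> lam x = lam q \<or> lam y = lam p \<or> lam y = lam q"
    using lam_cases[OF xy(1)] lam_cases[OF xy(2)] \<open>lam x \<noteq> lam y\<close> by auto
  moreover have "lam x \<noteq> lam p \<and> lam y \<noteq> lam p \<longrightarrow> (x \<in> Omega m q S \<longleftrightarrow> y \<in> Omega m q S)"
    "lam x \<noteq> lam q \<and> lam y \<noteq> lam q \<longrightarrow> (x \<in> Omega m p T \<longleftrightarrow> y \<in> Omega m p T)"
    using Omega_adj_iff[OF xy] swap.Omega_adj_iff[OF xy] by blast+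
  moreover have "lam x = lam p \<and> lam y \<noteq> lam p \<and> y \<in> Omega m q S \<longrightarrow> x \<in> Omega m q S"
    "lam y = lam p \<and> lam x \<noteq> lam p \<and> x \<in> Omega m q S \<longrightarrow> y \<in> Omega m q S"
    "lam x = lam q \<and> lam y \<noteq> lam q \<and> y \<in> Omega m p T \<longrightarrow> x \<in> Omega m p T"
    "lam y = lam q \<and> lam x \<noteq> lam q \<and> x \<in> Omega m p T \<longrightarrow> y \<in> Omega m p T"
    using Omega_adj_closed_to_supp[OF xy] Omega_adj_closed_to_supp[OF xy(2,1)]
      swap.Omega_adj_closed_to_supp[OF xy] swap.Omega_adj_closed_to_supp[OF xy(2,1)]
      cyc_adj_sym xy(3) by blast+
  moreover have "\<not> (x \<in> Omega m q S \<and> x \<in> Omega m p T)" "\<not> (y \<in> Omega m q S \<and> y \<in> Omega m p T)"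
    using Omegas_disjoint by blast+
  ultimately have "vertex_vec x $ 1 * vertex_vec y $ 3 \<noteq> vertex_vec x $ 3 * vertex_vec y $ 1"
    "vertex_vec x $ 1 * vertex_vec y $ 4 \<noteq> vertex_vec x $ 4 * vertex_vec y $ 1"
    "vertex_vec x $ 2 * vertex_vec y $ 3 \<noteq> vertex_vec x $ 3 * vertex_vec y $ 2"
    "vertex_vec x $ 2 * vertex_vec y $ 4 \<noteq> vertex_vec x $ 4 * vertex_vec y $ 2"
    unfolding vertex_vec_nth of_bool_conj[symmetric] of_bool_eq_iff by (argo)+
  then show ?thesis using k by auto
qed

lemma square_map_face:
  assumes face: "wed_face m p q \<tau>"
  shows "inj_on square_map \<tau> \<and> vec.independent (square_map ` \<tau>)"
proof -
  define V where "V = {k. Old k \<in> \<tau>}"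
  define L where "L = wedge_axes \<tau>"
  obtain i where i: "wed_shadow p q \<tau> \<subseteq> {i, Suc i mod m}"
    using pm_face_wed_shadow[OF face p_less q_less p_neq_q] unfolding pm_face_def by blast
  define E where "E = {i, Suc i mod m}"
  have old: "k < m" "k \<noteq> p" "k \<noteq> q" if "k \<in> V" for k
    using that face Old_in_wed_vertices_iff unfolding V_def wed_face_def by blast+
  have V_E: "V \<subseteq> E" using i unfolding E_def V_def wed_shadow_def by auto
  have P: "p \<in> E" if "{1, 2} \<subseteq> L"
    using that i unfolding E_def L_def wedge_axes_def wed_shadow_def by auto
  have Q: "q \<in> E" if "{3, 4} \<subseteq> L"
    using that i unfolding E_def L_def wedge_axes_def wed_shadow_def by auto
  have E_adj: "a = b \<or> cyc_adj m a b" if "a \<in> E" "b \<in> E" for a b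
    using that cyc_edge_adj unfolding E_def by blast
  let ?goal = "vec.independent (vertex_vec ` V \<union> (\<lambda>l. axis l 1) ` L) \<and> inj_on vertex_vec V
    \<and> vertex_vec ` V \<inter> (\<lambda>l. axis l 1) ` L = {}"
  have E_distinct: False if "a \<in> E" "b \<in> E" "c \<in> E" "a \<noteq> b" "a \<noteq> c" "b \<noteq> c" for a b c
    using that unfolding E_def by auto
  have single: "?goal" if V: "V = {x}" for x
  proof -
    have x: "x < m" "x \<noteq> p" "x \<noteq> q" "x \<in> E" using old V_E V by auto
    have "cyc_adj m x p \<and> \<not> {3, 4} \<subseteq> L" if "{1, 2} \<subseteq> L"
      using E_adj[OF x(4) P[OF that]] E_distinct[OF x(4) P[OF that] Q] x(2,3) p_neq_q by blast
    moreover have "cyc_adj m x q \<and> \<not> {1, 2} \<subseteq> L" if "{3, 4} \<subseteq> L"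
      using E_adj[OF x(4) Q[OF that]] E_distinct[OF x(4) P Q[OF that]] x(2,3) p_neq_q by blast
    ultimately have "\<exists>k. k \<notin> L \<and> vertex_vec x $ k \<noteq> 0"
      by (rule vertex_vec_coord_outside[OF x(1-3)])
    then obtain k where "vertex_vec x $ k \<noteq> 0" "k \<notin> L" by blast
    then have u: "vertex_vec x \<notin> vec.span ((\<lambda>l. axis l 1) ` L)" by (rule not_in_span_axes)
    have "vec.independent (insert (vertex_vec x) ((\<lambda>l. axis l 1) ` L))"
      using vec.independent_insertI[OF u independent_axes] .
    moreover have "vertex_vec x \<notin> (\<lambda>l. axis l 1) ` L" by (rule contrapos_nn[OF u vec.span_base])
    ultimately show ?thesis using V by simp
  qed
  have pair: "?goal" if V: "V = {x, y}" "x \<noteq> y" for x y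
  proof -
    have x: "x < m" "x \<noteq> p" "x \<noteq> q" "x \<in> E" and y: "y < m" "y \<noteq> p" "y \<noteq> q" "y \<in> E"
      using old V_E V by auto
    have adj: "cyc_adj m x y" using E_adj x(4) y(4) V(2) by blast
    have "\<not> {1, 2} \<subseteq> L" using E_distinct[OF x(4) y(4) P] x(2) y(2) V(2) by blast
    then obtain k1 where k1: "k1 \<in> {1, 2}" "k1 \<notin> L" by blast
    have "\<not> {3, 4} \<subseteq> L" using E_distinct[OF x(4) y(4) Q] x(3) y(3) V(2) by blast
    then obtain k2 where k2: "k2 \<in> {3, 4}" "k2 \<notin> L" by blast
    have minor: "vertex_vec x $ k1 * vertex_vec y $ k2 \<noteq> vertex_vec x $ k2 * vertex_vec y $ k1"
      using vertex_vec_minor[OF x(1) y(1) adj k1(1) k2(1)] .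
    have u: "vertex_vec x \<notin> vec.span ((\<lambda>l. axis l 1) ` L)"
    proof (cases "vertex_vec x $ k1 = 0")
      case True
      then show ?thesis using minor k2(2) by (intro not_in_span_axes[of _ k2]) auto
    next
      case False
      then show ?thesis using k1(2) by (rule not_in_span_axes)
    qed
    have w: "vertex_vec y \<notin> vec.span (insert (vertex_vec x) ((\<lambda>l. axis l 1) ` L))"
      using minor k1(2) k2(2) by (rule not_in_span_insert_axes)
    have "vec.independent (insert (vertex_vec y) (insert (vertex_vec x) ((\<lambda>l. axis l 1) ` L)))"
      using vec.independent_insertI[OF w vec.independent_insertI[OF u independent_axes]] .
    moreover have "vertex_vec x \<notin> (\<lambda>l. axis l 1) ` L" by (rule contrapos_nn[OF u vec.span_base])
    moreover have "vertex_vec y \<notin> insert (vertex_vec x) ((\<lambda>l. axis l 1) ` L)"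
      by (rule contrapos_nn[OF w vec.span_base])
    ultimately show ?thesis using V by (auto simp: insert_commute)
  qed
  have ?goal
    using V_E unfolding E_def
  proof (cases rule: subset_pair_cases)
    case 1
    then show ?thesis using independent_axes by simp
  qed (use single pair in blast)+
  then show ?thesis
    using square_map_image inj_on_square_map unfolding V_def L_def by simp
qed

end

theorem proposition3:
  fixes m p q :: nat and lam :: "nat \<Rightarrow> bit^2" and S T :: "nat set"
  assumes "m \<ge> 3"
    and "z2_char_map m lam"
    and "eset m lam p S" and "eset m lam q T"
    and "S \<noteq> {}" and "T \<noteq> {}"
    and "lam p \<noteq> lam q"
  shows "realizable_square m p q lam (inv_set m lam p S) (inv_set m lam q T)
           \<longleftrightarrow> Omega m q S \<inter> Omega m p T = {}"
proof
  interpret two_esets m lam p q S T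
    using assms(2-4,7) by unfold_locales
  show "Omega m q S \<inter> Omega m p T = {}"
    if "realizable_square m p q lam (inv_set m lam p S) (inv_set m lam q T)"
    using Omegas_disjoint_if_realizable[OF that] .
  show "realizable_square m p q lam (inv_set m lam p S) (inv_set m lam q T)"
    if "Omega m q S \<inter> Omega m p T = {}"
  proof -
    interpret disjoint_Omegas m lam p q S T
      using that by unfold_locales
    have "wed_char_map m p q square_map"
      unfolding wed_char_map_def using square_map_face by blast
    then show ?thesis
      unfolding realizable_square_def
      using proj_square_map_lam proj_square_map_inv_S proj_square_map_inv_T by blast
  qed
qed

end
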